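(* Let $X$ be a $T_0$ space. Then $\mathcal{O}(\mathcal{GSI}_2(X))=\mathcal{O}_{SI_2}(X)$; that is, a subset $U\subseteq X$ is $SI_2$-open if and only if whenever a net $(x_i)_{i\in I}$ in $X$ $GSI_2$-converges to some $x\in U$, then $x_i\in U$ eventually.
   Context: For a $T_0$ space $X$, the specialization order is $x\le y$ iff $x\in \mathrm{cl}\{y\}$; all order notions refer to it. For $A\subseteq X$, $\uparrow A=\{x: a\le x \text{ for some } a\in A\}$, $\uparrow x=\uparrow\{x\}$; $A^{\uparrow}$ is the set of upper bounds of $A$, $A^{\downarrow}$ the set of lower bounds, and $A^\delta=(A^\uparrow)^\downarrow$. A nonempty $A\subseteq X$ is irreducible if whenever $A\subseteq F_1\cup F_2$ with $F_1,F_2$ closed, then $A\subseteq F_1$ or $A\subseteq F_2$; $\mathrm{Irr}(X)$ is the set of irreducible subsets. $X^{(<\omega)}$ is the set of nonempty finite subsets of $X$. $P_S(X)$ is the set $Q(X)$ of nonempty compact saturated (upper) subsets of $X$ with the upper Vietoris topology, whose basis is $\{\square U: U\text{ open}\}$, $\square U=\{Q\in Q(X): Q\subseteq U\}$. A net is eventually in $U$ if from some index on all its terms lie in $U$. A subset $U\subseteq X$ is $SI_2$-open if $U$ is open in $X$ and for every $F\in\mathrm{Irr}(X)$, $F^\delta\cap U\ne\emptyset$ implies $F\cap U\neq\emptyset$; these form the topology $\mathcal{O}_{SI_2}(X)$. A net $(x_i)_{i\in I}$ $GSI_2$-converges to $x$ if there exists $\mathcal F\subseteq X^{(<\omega)}$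 with $\{\uparrow F:F\in\mathcal F\}$ irreducible in $P_S(X)$ such that (i) for every open $U$, if $\uparrow F\subseteq U$ for some $F\in\mathcal F$ then $x_i\in U$ eventually, and (ii) $\bigcap_{F\in\mathcal F}\uparrow F\subseteq\uparrow x$. $\mathcal{O}(\mathcal{GSI}_2(X))$ denotes the set of all $U\subseteq X$ such that whenever a net $GSI_2$-converges to a point of $U$, it is eventually in $U$. *)

theory Defs
  imports "HOL-Analysis.Analysis"
begin

definition spec_le :: "'a topology \<Rightarrow> 'a \<Rightarrow> 'a \<Rightarrow> bool" where
  "spec_le X x y \<longleftrightarrow> x \<in> topspace X \<and> y \<in> topspace X \<and> x \<in> X closure_of {y}"

definition upset :: "'a topology \<Rightarrow> 'a set \<Rightarrow> 'a set" where
  "upset X A = {x \<in> topspace X. \<exists>a\<in>A. spec_le X a x}"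

definition upper_bounds :: "'a topology \<Rightarrow> 'a set \<Rightarrow> 'a set" where
  "upper_bounds X A = {y \<in> topspace X. \<forall>a\<in>A. spec_le X a y}"

definition lower_bounds :: "'a topology \<Rightarrow> 'a set \<Rightarrow> 'a set" where
  "lower_bounds X A = {y \<in> topspace X. \<forall>a\<in>A. spec_le X y a}"

definition delta_cut :: "'a topology \<Rightarrow> 'a set \<Rightarrow> 'a set" where
  "delta_cut X A = lower_bounds X (upper_bounds X A)"

definition irreducible_in :: "'a topology \<Rightarrow> 'a set \<Rightarrow> bool" where
  "irreducible_in X A \<longleftrightarrow> A \<noteq> {} \<and> A \<subseteq> topspace X \<and>
     (\<forall>F1 F2. closedin X F1 \<longrightarrow> closedin X F2 \<longrightarrow> A \<subseteq> F1 \<union> F2 \<longrightarrow> A \<subseteq> F1 \<or> A \<subseteq> F2)"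

definition Irr :: "'a topology \<Rightarrow> 'a set set" where
  "Irr X = {A. irreducible_in X A}"

definition fin_subsets :: "'a topology \<Rightarrow> 'a set set" where
  "fin_subsets X = {F. F \<subseteq> topspace X \<and> finite F \<and> F \<noteq> {}}"

definition QX :: "'a topology \<Rightarrow> 'a set set" where
  "QX X = {Q. Q \<noteq> {} \<and> compactin X Q \<and> upset X Q = Q}"

definition box :: "'a topology \<Rightarrow> 'a set \<Rightarrow> 'a set set" where
  "box X U = {Q \<in> QX X. Q \<subseteq> U}"

definition smyth_space :: "'a topology \<Rightarrow> 'a set topology" where
  "smyth_space X = topology_generated_by {box X U | U. openin X U}"

definition SI2_open :: "'a topology \<Rightarrow> 'a set \<Rightarrow> bool" where
  "SI2_open X U \<longleftrightarrow> openin X U \<and>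
     (\<forall>F\<in>Irr X. delta_cut X F \<inter> U \<noteq> {} \<longrightarrow> F \<inter> U \<noteq> {})"

text \<open>Nets are represented by their filters of tails (eventuality filters): a net
  (x_i) in X is eventually in U iff U belongs to its tail filter N; tail filters of
  nets in X are exactly the proper filters N with eventually (\<in> topspace X).\<close>
definition GSI2_converges :: "'a topology \<Rightarrow> 'a filter \<Rightarrow> 'a \<Rightarrow> bool" where
  "GSI2_converges X N x \<longleftrightarrow>
     (\<exists>\<F>. \<F> \<subseteq> fin_subsets X \<and>
        irreducible_in (smyth_space X) ((\<lambda>F. upset X F) ` \<F>) \<and>
        (\<forall>U. openin X U \<longrightarrow> (\<exists>F\<in>\<F>. upset X F \<subseteq> U) \<longrightarrow> eventually (\<lambda>y. y \<in> U) N) \<and>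
        (\<Inter>F\<in>\<F>. upset X F) \<subseteq> upset X {x})"

definition GSI2_open :: "'a topology \<Rightarrow> 'a set \<Rightarrow> bool" where
  "GSI2_open X U \<longleftrightarrow> U \<subseteq> topspace X \<and>
     (\<forall>N x. N \<noteq> bot \<longrightarrow> eventually (\<lambda>y. y \<in> topspace X) N \<longrightarrow>
        x \<in> U \<longrightarrow> GSI2_converges X N x \<longrightarrow> eventually (\<lambda>y. y \<in> U) N)"

end

theory Submission
  imports Defs
begin

(* Suppose a net GSI_2-converges to x \<in> U via a
   family \<F> but no \<up>F (F \<in> \<F>) lies in U.  By the topological Rudin lemma there is
   an irreducible closed set A disjoint from U meeting every F \<in> \<F>; every upper
   bound of A lies in \<Inter>{\<up>F. F \<in> \<F>} \<subseteq> \<up>x, so x \<in> A^\<delta> \<inter> U, contradicting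
   SI_2-openness.
   Conversely, the neighbourhood filter of x GSI_2-converges to x via \<F> = {{x}}, so
   GSI_2-open sets are open; and for irreducible F with y \<in> F^\<delta> \<inter> U, the net of
   traces V \<inter> F of open sets V meeting F GSI_2-converges to y via \<F> = {{a}. a \<in> F},
   whose image in P_S(X) is irreducible since a \<mapsto> \<up>a is continuous.  Hence F meets U. *)

lemma spec_le_refl: "a \<in> topspace X \<Longrightarrow> spec_le X a a"
  unfolding spec_le_def using closure_of_subset[of "{a}" X] by auto

lemma spec_le_trans:
  assumes "spec_le X a b" "spec_le X b c"
  shows "spec_le X a c"
proof -
  have "X closure_of {b} \<subseteq> X closure_of {c}"
    using assms(2) unfolding spec_le_def by (simp add: closure_of_minimal)
  then show ?thesis using assms unfolding spec_le_def by blast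
qed

lemma spec_le_openin:
  assumes "openin X V" "a \<in> V" "spec_le X a b"
  shows "b \<in> V"
proof (rule ccontr)
  assume "b \<notin> V"
  then have "X closure_of {b} \<subseteq> topspace X - V"
    using assms(1,3) unfolding spec_le_def by (intro closure_of_minimal) auto
  then show False using assms(2,3) unfolding spec_le_def by auto
qed

lemma upset_subset_openin: "openin X V \<Longrightarrow> F \<subseteq> V \<Longrightarrow> upset X F \<subseteq> V"
  unfolding upset_def by (auto intro: spec_le_openin)

lemma subset_upset: "F \<subseteq> topspace X \<Longrightarrow> F \<subseteq> upset X F"
  unfolding upset_def by (auto intro: spec_le_refl)

lemma upset_subset_topspace: "upset X F \<subseteq> topspace X"
  unfolding upset_def by auto

lemma upset_upset: "upset X (upset X A) = upset X A"
proof
  show "upset X (upset X A) \<subseteq> upset X A"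
    unfolding upset_def by (auto intro: spec_le_trans)
  show "upset X A \<subseteq> upset X (upset X A)"
    by (rule subset_upset[OF upset_subset_topspace])
qed

lemma compactin_upset_singleton:
  assumes "a \<in> topspace X"
  shows "compactin X (upset X {a})"
  unfolding compactin_def
proof (intro conjI upset_subset_topspace allI impI)
  fix \<U> assume \<U>: "(\<forall>B\<in>\<U>. openin X B) \<and> upset X {a} \<subseteq> \<Union>\<U>"
  then obtain B where B: "B \<in> \<U>" "a \<in> B"
    using subset_upset[of "{a}" X] assms by blast
  then have "upset X {a} \<subseteq> B"
    using \<U> upset_subset_openin[of X B "{a}"] by blast
  with B show "\<exists>\<F>. finite \<F> \<and> \<F> \<subseteq> \<U> \<and> upset X {a} \<subseteq> \<Union>\<F>"
    by (intro exI[of _ "{B}"]) auto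
qed

lemma upset_singleton_in_QX: "a \<in> topspace X \<Longrightarrow> upset X {a} \<in> QX X"
  unfolding QX_def using subset_upset[of "{a}" X]
  by (auto simp: compactin_upset_singleton upset_upset)

lemma topspace_smyth_space: "topspace (smyth_space X) = QX X"
proof -
  have "Q \<in> box X (topspace X)" if "Q \<in> QX X" for Q
    using that compactin_subset_topspace unfolding QX_def box_def by auto
  then show ?thesis
    unfolding smyth_space_def topology_generated_by_topspace by (auto simp: box_def)
qed

lemma openin_smyth_box: "openin X U \<Longrightarrow> openin (smyth_space X) (box X U)"
  unfolding smyth_space_def by (rule topology_generated_by_Basis) auto

lemma continuous_map_upset_singleton:
  "continuous_map X (smyth_space X) (\<lambda>a. upset X {a})"
  unfolding smyth_space_def
proof (rule continuous_on_generated_topo)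
  fix \<B> assume "\<B> \<in> {box X U |U. openin X U}"
  then obtain U where U: "openin X U" "\<B> = box X U" by auto
  have "a \<in> U" if "a \<in> topspace X" "upset X {a} \<subseteq> U" for a
    using that subset_upset[of "{a}" X] by auto
  then have "(\<lambda>a. upset X {a}) -` \<B> \<inter> topspace X = U"
    using U openin_subset[OF U(1)] upset_subset_openin[OF U(1), of "{_}"]
      upset_singleton_in_QX[of _ X]
    unfolding box_def by auto
  then show "openin X ((\<lambda>a. upset X {a}) -` \<B> \<inter> topspace X)"
    using U by simp
next
  show "(\<lambda>a. upset X {a}) ` topspace X \<subseteq> \<Union>{box X U |U. openin X U}"
    using upset_singleton_in_QX[of _ X] topspace_smyth_space[of X]
    unfolding smyth_space_def by auto
qed

lemma irreducible_inD:
  "irreducible_in X A \<Longrightarrow> closedin X C1 \<Longrightarrow> closedin X C2 \<Longrightarrow> A \<subseteq> C1 \<union> C2 \<Longrightarrow>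
    A \<subseteq> C1 \<or> A \<subseteq> C2"
  unfolding irreducible_in_def by blast

lemma irreducible_in_continuous_image:
  assumes f: "continuous_map X Y f" and A: "irreducible_in X A"
  shows "irreducible_in Y (f ` A)"
  unfolding irreducible_in_def
proof (intro conjI allI impI)
  have AX: "A \<subseteq> topspace X" using A unfolding irreducible_in_def by auto
  show "f ` A \<noteq> {}" using A unfolding irreducible_in_def by auto
  show "f ` A \<subseteq> topspace Y"
    using AX continuous_map_image_subset_topspace[OF f] by auto
  fix C1 C2 assume C: "closedin Y C1" "closedin Y C2" "f ` A \<subseteq> C1 \<union> C2"
  have "A \<subseteq> {x \<in> topspace X. f x \<in> C1} \<union> {x \<in> topspace X. f x \<in> C2}"
    using AX C(3) by auto
  then have "A \<subseteq> {x \<in> topspace X. f x \<in> C1} \<or> A \<subseteq> {x \<in> topspace X. f x \<in> C2}"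
    by (rule irreducible_inD[OF A closedin_continuous_map_preimage[OF f C(1)]
          closedin_continuous_map_preimage[OF f C(2)]])
  then show "f ` A \<subseteq> C1 \<or> f ` A \<subseteq> C2" by auto
qed

lemma GSI2_converges_nhdsin:
  assumes "x \<in> topspace X"
  shows "GSI2_converges X (nhdsin X x) x"
  unfolding GSI2_converges_def
proof (intro exI[of _ "{{x}}"] conjI allI impI)
  show "{{x}} \<subseteq> fin_subsets X" using assms unfolding fin_subsets_def by auto
  show "irreducible_in (smyth_space X) ((\<lambda>F. upset X F) ` {{x}})"
    unfolding irreducible_in_def topspace_smyth_space
    using upset_singleton_in_QX[OF assms] by auto
  fix V assume "openin X V" "\<exists>F\<in>{{x}}. upset X F \<subseteq> V"
  then show "eventually (\<lambda>y. y \<in> V) (nhdsin X x)"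
    unfolding eventually_nhdsin using subset_upset[of "{x}" X] assms by auto
qed auto

lemma GSI2_open_imp_openin:
  assumes "GSI2_open X U"
  shows "openin X U"
proof (subst openin_subopen, intro ballI)
  fix x assume x: "x \<in> U"
  then have xX: "x \<in> topspace X" using assms unfolding GSI2_open_def by auto
  have "nhdsin X x \<noteq> bot"
    using xX by (auto simp: trivial_limit_def eventually_nhdsin)
  moreover have "eventually (\<lambda>y. y \<in> topspace X) (nhdsin X x)"
    unfolding eventually_nhdsin using xX by auto
  ultimately have "eventually (\<lambda>y. y \<in> U) (nhdsin X x)"
    using assms x GSI2_converges_nhdsin[OF xX] unfolding GSI2_open_def by blast
  then show "\<exists>T. openin X T \<and> x \<in> T \<and> T \<subseteq> U"
    unfolding eventually_nhdsin using xX by auto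
qed

(* Tail filter of the net (x\<^sub>V) with x\<^sub>V \<in> V \<inter> F, indexed by the open sets V meeting F. *)
definition trace_filter :: "'a topology \<Rightarrow> 'a set \<Rightarrow> 'a filter" where
  "trace_filter X F = (INF V\<in>{V. openin X V \<and> V \<inter> F \<noteq> {}}. principal (V \<inter> F))"

lemma irreducible_in_Int_openin:
  assumes F: "irreducible_in X F" and "openin X V1" "openin X V2" "V1 \<inter> F \<noteq> {}" "V2 \<inter> F \<noteq> {}"
  shows "V1 \<inter> V2 \<inter> F \<noteq> {}"
proof
  assume "V1 \<inter> V2 \<inter> F = {}"
  then have "F \<subseteq> (topspace X - V1) \<union> (topspace X - V2)"
    using F unfolding irreducible_in_def by auto
  then have "F \<subseteq> topspace X - V1 \<or> F \<subseteq> topspace X - V2"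
    using assms(2,3) by (intro irreducible_inD[OF F]) auto
  then show False using assms(4,5) by auto
qed

lemma eventually_trace_filter:
  assumes F: "irreducible_in X F"
  shows "eventually P (trace_filter X F) \<longleftrightarrow>
    (\<exists>V. openin X V \<and> V \<inter> F \<noteq> {} \<and> (\<forall>z\<in>V \<inter> F. P z))"
proof -
  let ?\<V> = "{V. openin X V \<and> V \<inter> F \<noteq> {}}"
  have "topspace X \<in> ?\<V>" using F unfolding irreducible_in_def by auto
  moreover have "\<exists>W\<in>?\<V>. principal (W \<inter> F) \<le> inf (principal (V1 \<inter> F)) (principal (V2 \<inter> F))"
    if "V1 \<in> ?\<V>" "V2 \<in> ?\<V>" for V1 V2
    using that irreducible_in_Int_openin[OF F, of V1 V2]
    by (intro bexI[of _ "V1 \<inter> V2"]) auto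
  ultimately show ?thesis
    unfolding trace_filter_def by (subst eventually_INF_base) (auto simp: eventually_principal)
qed

lemma GSI2_converges_trace_filter:
  assumes F: "irreducible_in X F" and y: "y \<in> delta_cut X F"
  shows "GSI2_converges X (trace_filter X F) y"
  unfolding GSI2_converges_def
proof (intro exI[of _ "(\<lambda>a. {a}) ` F"] conjI allI impI)
  have FX: "F \<subseteq> topspace X" using F unfolding irreducible_in_def by auto
  then show "(\<lambda>a. {a}) ` F \<subseteq> fin_subsets X" unfolding fin_subsets_def by auto
  have "(\<lambda>G. upset X G) ` (\<lambda>a. {a}) ` F = (\<lambda>a. upset X {a}) ` F" by auto
  then show "irreducible_in (smyth_space X) ((\<lambda>G. upset X G) ` (\<lambda>a. {a}) ` F)"
    using irreducible_in_continuous_image[OF continuous_map_upset_singleton F] by simp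
  fix V assume V: "openin X V" "\<exists>G\<in>(\<lambda>a. {a}) ` F. upset X G \<subseteq> V"
  then have "V \<inter> F \<noteq> {}" using FX subset_upset[of "{_}" X] by blast
  then show "eventually (\<lambda>z. z \<in> V) (trace_filter X F)"
    unfolding eventually_trace_filter[OF F] using V(1) by auto
next
  show "(\<Inter>G\<in>(\<lambda>a. {a}) ` F. upset X G) \<subseteq> upset X {y}"
  proof
    fix z assume z: "z \<in> (\<Inter>G\<in>(\<lambda>a. {a}) ` F. upset X G)"
    then have "z \<in> upper_bounds X F"
      using F unfolding irreducible_in_def upper_bounds_def upset_def by auto
    then show "z \<in> upset X {y}"
      using y unfolding delta_cut_def lower_bounds_def upper_bounds_def upset_def by auto
  qed
qed

lemma GSI2_open_imp_SI2_open:
  assumes G: "GSI2_open X U"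
  shows "SI2_open X U"
  unfolding SI2_open_def
proof (intro conjI ballI impI)
  show "openin X U" using GSI2_open_imp_openin[OF G] .
  fix F assume "F \<in> Irr X" and "delta_cut X F \<inter> U \<noteq> {}"
  then obtain y where F: "irreducible_in X F" and y: "y \<in> delta_cut X F" "y \<in> U"
    unfolding Irr_def by auto
  have "trace_filter X F \<noteq> bot"
    using F by (auto simp: trivial_limit_def eventually_trace_filter)
  moreover have "eventually (\<lambda>z. z \<in> topspace X) (trace_filter X F)"
    using F unfolding eventually_trace_filter[OF F] irreducible_in_def
    by (intro exI[of _ "topspace X"]) auto
  ultimately have "eventually (\<lambda>z. z \<in> U) (trace_filter X F)"
    using G y GSI2_converges_trace_filter[OF F y(1)] unfolding GSI2_open_def by blast
  then show "F \<inter> U \<noteq> {}" unfolding eventually_trace_filter[OF F] by auto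
qed

lemma maximal_open_avoiding:
  assumes fin: "\<And>F. F \<in> \<F> \<Longrightarrow> finite F" and U: "openin X U" "\<forall>F\<in>\<F>. \<not> F \<subseteq> U"
  obtains W where "openin X W" "U \<subseteq> W" "\<forall>F\<in>\<F>. \<not> F \<subseteq> W"
    "\<And>W'. openin X W' \<Longrightarrow> W \<subseteq> W' \<Longrightarrow> \<forall>F\<in>\<F>. \<not> F \<subseteq> W' \<Longrightarrow> W' = W"
proof -
  let ?D = "{W. openin X W \<and> U \<subseteq> W \<and> (\<forall>F\<in>\<F>. \<not> F \<subseteq> W)}"
  have "\<exists>W\<in>?D. \<forall>W'\<in>?D. W \<subseteq> W' \<longrightarrow> W' = W"
  proof (rule subset_Zorn_nonempty)
    show "?D \<noteq> {}" using U by blast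
    fix \<C> assume "\<C> \<noteq> {}" and chain: "subset.chain ?D \<C>"
    then have "\<C> \<subseteq> ?D" unfolding subset.chain_def by auto
    moreover have "\<not> F \<subseteq> \<Union>\<C>" if F: "F \<in> \<F>" for F
    proof
      assume "F \<subseteq> \<Union>\<C>"
      then obtain B where "B \<in> \<C>" "F \<subseteq> B"
        by (rule finite_subset_Union_chain[OF fin[OF F] _ \<open>\<C> \<noteq> {}\<close> chain])
      then show False using \<open>\<C> \<subseteq> ?D\<close> F by auto
    qed
    ultimately show "\<Union>\<C> \<in> ?D" using \<open>\<C> \<noteq> {}\<close> by auto
  qed
  then obtain W where "W \<in> ?D" and "\<forall>W'\<in>?D. W \<subseteq> W' \<longrightarrow> W' = W" by blast
  then show thesis by (intro that) auto
qed

lemma upset_in_box_iff: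
  assumes "upset X F \<in> QX X" "F \<subseteq> topspace X" "openin X W"
  shows "upset X F \<in> box X W \<longleftrightarrow> F \<subseteq> W"
proof
  show "upset X F \<in> box X W \<Longrightarrow> F \<subseteq> W"
    using subset_upset[OF assms(2)] unfolding box_def by auto
  show "F \<subseteq> W \<Longrightarrow> upset X F \<in> box X W"
    using assms(1) upset_subset_openin[OF assms(3)] unfolding box_def by auto
qed

lemma topological_Rudin_lemma:
  assumes \<F>: "\<F> \<subseteq> fin_subsets X"
    and irr: "irreducible_in (smyth_space X) ((\<lambda>F. upset X F) ` \<F>)"
    and U: "openin X U" "\<forall>F\<in>\<F>. \<not> F \<subseteq> U"
  obtains A where "closedin X A" "irreducible_in X A" "A \<inter> U = {}" "\<forall>F\<in>\<F>. F \<inter> A \<noteq> {}"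
proof -
  have FX: "F \<subseteq> topspace X" and "finite F" if "F \<in> \<F>" for F
    using \<F> that unfolding fin_subsets_def by auto
  have FQ: "upset X F \<in> QX X" if "F \<in> \<F>" for F
    using irr that unfolding irreducible_in_def topspace_smyth_space by auto
  obtain W where W: "openin X W" "U \<subseteq> W" "\<forall>F\<in>\<F>. \<not> F \<subseteq> W"
    and Wmax: "\<And>W'. openin X W' \<Longrightarrow> W \<subseteq> W' \<Longrightarrow> \<forall>F\<in>\<F>. \<not> F \<subseteq> W' \<Longrightarrow> W' = W"
    using maximal_open_avoiding[OF \<open>\<And>F. F \<in> \<F> \<Longrightarrow> finite F\<close> U] by blast
  define A where "A = topspace X - W"
  have meets: "\<forall>F\<in>\<F>. F \<inter> A \<noteq> {}" using W(3) FX unfolding A_def by blast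
  have swallow: "\<exists>F\<in>\<F>. F \<subseteq> W \<union> (topspace X - C)" if "closedin X C" "\<not> A \<subseteq> C" for C
  proof -
    have "openin X (W \<union> (topspace X - C))" using W(1) that(1) by auto
    moreover have "W \<union> (topspace X - C) \<noteq> W" using that(2) unfolding A_def by auto
    ultimately show ?thesis using Wmax[of "W \<union> (topspace X - C)"] by blast
  qed
  have "irreducible_in X A"
    unfolding irreducible_in_def
  proof (intro conjI allI impI)
    show "A \<noteq> {}"
      using meets irr unfolding irreducible_in_def by auto
    show "A \<subseteq> topspace X" unfolding A_def by auto
    fix C1 C2 assume C: "closedin X C1" "closedin X C2" "A \<subseteq> C1 \<union> C2"
    show "A \<subseteq> C1 \<or> A \<subseteq> C2"
    proof (rule ccontr)
      let ?T = "topspace (smyth_space X)"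
      define W1 where "W1 = W \<union> (topspace X - C1)"
      define W2 where "W2 = W \<union> (topspace X - C2)"
      have W12: "openin X W1" "openin X W2" using W(1) C unfolding W1_def W2_def by auto
      have in_box: "upset X F \<in> ?T - box X V \<longleftrightarrow> \<not> F \<subseteq> V" if "F \<in> \<F>" "openin X V" for F V
        using upset_in_box_iff[OF FQ[OF that(1)] FX[OF that(1)] that(2)] FQ[OF that(1)]
        unfolding topspace_smyth_space by blast
      assume "\<not> (A \<subseteq> C1 \<or> A \<subseteq> C2)"
      then obtain F1 F2 where "F1 \<in> \<F>" "F1 \<subseteq> W1" "F2 \<in> \<F>" "F2 \<subseteq> W2"
        using swallow[OF C(1)] swallow[OF C(2)] unfolding W1_def W2_def by blast
      then have "\<not> (\<lambda>F. upset X F) ` \<F> \<subseteq> ?T - box X W1"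
        and "\<not> (\<lambda>F. upset X F) ` \<F> \<subseteq> ?T - box X W2"
        using in_box W12 by blast+
      moreover have "closedin (smyth_space X) (?T - box X W1)"
        and "closedin (smyth_space X) (?T - box X W2)"
        using W12 by (simp_all add: closedin_diff openin_smyth_box)
      ultimately have "\<not> (\<lambda>F. upset X F) ` \<F> \<subseteq> (?T - box X W1) \<union> (?T - box X W2)"
        using irreducible_inD[OF irr] by blast
      then obtain F where F: "F \<in> \<F>" "F \<subseteq> W1" "F \<subseteq> W2"
        using in_box W12 by blast
      then have "F \<subseteq> W" using C(3) FX unfolding W1_def W2_def A_def by blast
      then show False using W(3) F(1) by blast
    qed
  qed
  moreover have "closedin X A" "A \<inter> U = {}" using W(1,2) unfolding A_def by auto
  ultimately show thesis using that meets by blast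
qed

lemma delta_cut_transversal:
  assumes "\<forall>F\<in>\<F>. F \<inter> A \<noteq> {}" "(\<Inter>F\<in>\<F>. upset X F) \<subseteq> upset X {x}" "x \<in> topspace X"
  shows "x \<in> delta_cut X A"
  unfolding delta_cut_def lower_bounds_def
proof (intro CollectI conjI ballI)
  show "x \<in> topspace X" by fact
  fix u assume "u \<in> upper_bounds X A"
  then have u: "u \<in> topspace X" "\<forall>a\<in>A. spec_le X a u" unfolding upper_bounds_def by auto
  have "u \<in> upset X F" if F: "F \<in> \<F>" for F
  proof -
    obtain f where "f \<in> F" "f \<in> A" using assms(1) F by blast
    then show ?thesis using u unfolding upset_def by auto
  qed
  then have "u \<in> upset X {x}" using assms(2) by blast
  then show "spec_le X x u" unfolding upset_def by auto
qed

lemma SI2_open_imp_GSI2_open: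
  assumes SI: "SI2_open X U"
  shows "GSI2_open X U"
  unfolding GSI2_open_def
proof (intro conjI allI impI)
  have U: "openin X U" using SI unfolding SI2_open_def by auto
  then show UX: "U \<subseteq> topspace X" by (rule openin_subset)
  fix N x assume x: "x \<in> U" and "GSI2_converges X N x"
  then obtain \<F> where \<F>: "\<F> \<subseteq> fin_subsets X"
    and irr: "irreducible_in (smyth_space X) ((\<lambda>F. upset X F) ` \<F>)"
    and ev: "\<forall>V. openin X V \<longrightarrow> (\<exists>F\<in>\<F>. upset X F \<subseteq> V) \<longrightarrow> eventually (\<lambda>y. y \<in> V) N"
    and cap: "(\<Inter>F\<in>\<F>. upset X F) \<subseteq> upset X {x}"
    unfolding GSI2_converges_def by blast
  have "\<exists>F\<in>\<F>. F \<subseteq> U"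
  proof (rule ccontr)
    assume "\<not> (\<exists>F\<in>\<F>. F \<subseteq> U)"
    then have "\<forall>F\<in>\<F>. \<not> F \<subseteq> U" by blast
    then obtain A where A: "irreducible_in X A" "A \<inter> U = {}" "\<forall>F\<in>\<F>. F \<inter> A \<noteq> {}"
      using topological_Rudin_lemma[OF \<F> irr U] by metis
    have "x \<in> delta_cut X A"
      using x UX by (intro delta_cut_transversal[OF A(3) cap]) auto
    moreover have "A \<in> Irr X" using A(1) unfolding Irr_def by simp
    ultimately have "A \<inter> U \<noteq> {}" using SI x unfolding SI2_open_def by blast
    then show False using A(2) by simp
  qed
  then obtain F where "F \<in> \<F>" "upset X F \<subseteq> U" using upset_subset_openin[OF U] by blast
  then show "eventually (\<lambda>y. y \<in> U) N" using ev U by blast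
qed

theorem theorem3p7:
  fixes X :: "'a topology"
  assumes "t0_space X"
  shows "{U. GSI2_open X U} = {U. SI2_open X U}"
  using SI2_open_imp_GSI2_open GSI2_open_imp_SI2_open by blast

end
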